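(* In the setting described in the context, for every $\alpha\in(0,1)$ and every almost surely finite $(\mathcal F_T)$-stopping time $\tau$, with $\alpha^{\mathsf B}=m\alpha/(2k)$, we have $\mathrm{sFCR}(\alpha^{\mathsf B})\le\alpha$.
   Context: Setting: $(\Omega,\mathcal F,\mathbb P)$ is a probability space with a filtration $(\mathcal F_T)_{T\in\mathbb N}$; $k\ge2$, $m\in\{1,\dots,k-1\}$, $\alpha\in(0,1)$; $\theta_1\ge\dots\ge\theta_k$ are real parameters; $[k]=\{1,\dots,k\}$. For each $i\in[k]$ and $\beta\in(0,1)$, $(L_{iT}(\beta))_{T}$ and $(U_{iT}(\beta))_T$ are $(\mathcal F_T)$-adapted processes with values in $[-\infty,\infty]$, with $L_{iT}(\beta)\le U_{iT}(\beta)$, satisfying $\mathbb P(\exists T\in\mathbb N:\theta_i\le L_{iT}(\beta))\le\beta$ and $\mathbb P(\exists T\in\mathbb N:\theta_i\ge U_{iT}(\beta))\le\beta$. No dependence assumptions across $i$. SCS procedure: set $\alpha_{km}=\alpha/\{2m(k-m)\}$, $\hat{\mathcal S}_0=[k]$, and for $T\in\mathbb N$ let $L^{(m)}_T(\alpha_{km})$ be the $m$-th largest among $\{L_{iT}(\alpha_{km}):i\in\hat{\mathcal S}_{T-1}\}$ and $\hat{\mathcal S}_T=\hat{\mathcal S}_{T-1}\setminus\{i\in\hat{\mathcal S}_{T-1}:U_{iT}(\alpha_{km})<L^{(m)}_T(\alpha_{km})\}$. Stopped false coverage rate: for a stopping time $\tau$ and a level $a\in(0,1)$, $\mathrm{sFCR}(a)=\mathbb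 E\Big[\sum_{i\in\hat{\mathcal S}_\tau}\frac{\mathbb I\{\theta_i\notin(L_{i\tau}(a),U_{i\tau}(a))\}}{|\hat{\mathcal S}_\tau|}\Big]$. *)

theory Defs
  imports "HOL-Probability.Probability" "HOL-Library.Multiset"
begin

definition mth_largest :: "nat \<Rightarrow> ereal multiset \<Rightarrow> ereal" where
  "mth_largest m A = rev (sorted_list_of_multiset A) ! (m - 1)"

text \<open>The SCS selection sets.  Here L i T \<omega> and U i T \<omega> are the bounds already
evaluated at the level used by the procedure.  Index sets are subsets of {1..k}.\<close>
fun SCS_set :: "nat \<Rightarrow> nat \<Rightarrow> (nat \<Rightarrow> nat \<Rightarrow> 'a \<Rightarrow> ereal) \<Rightarrow> (nat \<Rightarrow> nat \<Rightarrow> 'a \<Rightarrow> ereal)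
    \<Rightarrow> nat \<Rightarrow> 'a \<Rightarrow> nat set" where
  "SCS_set k m L U 0 \<omega> = {1..k}"
| "SCS_set k m L U (Suc T) \<omega> =
     (let S = SCS_set k m L U T \<omega>;
          Lm = mth_largest m (image_mset (\<lambda>i. L i (Suc T) \<omega>) (mset_set S))
      in S - {i \<in> S. U i (Suc T) \<omega> < Lm})"

text \<open>Stopped false coverage rate at level a, for selection sets S and stopping time tau.
On the (null) event tau = infinity the integrand is set to 0.\<close>
definition sFCR :: "'a measure \<Rightarrow> (nat \<Rightarrow> real \<Rightarrow> nat \<Rightarrow> 'a \<Rightarrow> ereal)
    \<Rightarrow> (nat \<Rightarrow> real \<Rightarrow> nat \<Rightarrow> 'a \<Rightarrow> ereal) \<Rightarrow> (nat \<Rightarrow> real)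
    \<Rightarrow> (nat \<Rightarrow> 'a \<Rightarrow> nat set) \<Rightarrow> ('a \<Rightarrow> enat) \<Rightarrow> real \<Rightarrow> real" where
  "sFCR M L U \<theta> S \<tau> a =
     integral\<^sup>L M (\<lambda>\<omega>. case \<tau> \<omega> of
        \<infinity> \<Rightarrow> 0
      | enat t \<Rightarrow> (\<Sum>i\<in>S t \<omega>.
            (if \<not> (L i a t \<omega> < ereal (\<theta> i) \<and> ereal (\<theta> i) < U i a t \<omega>) then 1 else 0))
          / real (card (S t \<omega>)))"

end

theory Submission
  imports Defs
begin

(* SCS never keeps fewer than m indices: an index is dropped only when its upper bound falls
   below the m-th largest lower bound, and since L <= U the m indices carrying the m largest lower
   bounds survive.  Hence, at whatever time tau the procedure is stopped, the proportion of selected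
   intervals missing their parameter is at most 1/m times the number of i in [k] for which one of
   the two time-uniform one-sided bounds ever fails.  Taking expectations and a union bound over
   these 2k failure events, each of probability at most m alpha/(2k), gives
   sFCR <= 2k (m alpha/(2k)) / m = alpha.  The level used inside SCS only matters through L <= U. *)

lemma size_filter_ge_mth_largest:
  fixes A :: "ereal multiset"
  assumes "1 \<le> m" "m \<le> size A"
  shows "m \<le> size (filter_mset (\<lambda>x. mth_largest m A \<le> x) A)"
proof -
  define xs where "xs = rev (sorted_list_of_multiset A)"
  have A: "A = mset xs" and len: "length xs = size A" and sorted: "sorted (rev xs)"
    unfolding xs_def by (simp_all flip: size_mset)
  have "mth_largest m A \<le> x" if "x \<in> set (take m xs)" for x
  proof -
    obtain j where "j < m" "j < length xs" "x = xs ! j"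
      using \<open>x \<in> set (take m xs)\<close> by (auto simp: in_set_conv_nth)
    then show ?thesis
      using sorted_rev_nth_mono[OF sorted, of j "m - 1"] assms len
      unfolding mth_largest_def xs_def[symmetric] by simp
  qed
  then have "m = length (filter (\<lambda>x. mth_largest m A \<le> x) (take m xs))"
    using assms len by (simp add: filter_id_conv)
  also have "\<dots> \<le> length (filter (\<lambda>x. mth_largest m A \<le> x) xs)"
    by (metis append_take_drop_id filter_append length_append le_add1)
  finally show ?thesis
    by (simp add: A flip: mset_filter)
qed

lemma card_diff_below_mth_largest:
  fixes l u :: "'i \<Rightarrow> ereal"
  assumes "finite S" "1 \<le> m" "m \<le> card S" "\<And>i. i \<in> S \<Longrightarrow> l i \<le> u i"
  shows "m \<le> card (S - {i \<in> S. u i < mth_largest m (image_mset l (mset_set S))})"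
proof -
  define c where "c = mth_largest m (image_mset l (mset_set S))"
  have "m \<le> size (filter_mset (\<lambda>x. c \<le> x) (image_mset l (mset_set S)))"
    unfolding c_def using assms by (intro size_filter_ge_mth_largest) auto
  also have "\<dots> = card {i \<in> S. c \<le> l i}"
    using assms(1) by (simp add: filter_mset_image_mset filter_mset_mset_set)
  also have "\<dots> \<le> card (S - {i \<in> S. u i < c})"
    using assms(1,4) by (intro card_mono) (auto dest: order.trans le_less_trans)
  finally show ?thesis
    unfolding c_def .
qed

lemma SCS_set_subset: "SCS_set k m L U T \<omega> \<subseteq> {1..k}"
  by (induction T) (auto simp: Let_def)

lemma card_SCS_set_ge:
  assumes "1 \<le> m" "m \<le> k"
    and "\<And>i T. i \<in> {1..k} \<Longrightarrow> T \<ge> 1 \<Longrightarrow> L i T \<omega> \<le> U i T \<omega>"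
  shows "m \<le> card (SCS_set k m L U T \<omega>)"
proof (induction T)
  case (Suc T)
  then show ?case
    using assms SCS_set_subset[of k m L U T \<omega>] finite_subset[OF SCS_set_subset]
    by (auto simp: Let_def intro!: card_diff_below_mth_largest)
qed (use assms in simp)

lemma sets_Collect_ex_adapted:
  assumes "\<And>T. T \<ge> 1 \<Longrightarrow> space (F T) = space M" "\<And>T. T \<ge> 1 \<Longrightarrow> sets (F T) \<subseteq> sets M"
    and "\<And>T. T \<ge> 1 \<Longrightarrow> {\<omega> \<in> space (F T). P T \<omega>} \<in> sets (F T)"
  shows "{\<omega> \<in> space M. \<exists>T::nat\<ge>1. P T \<omega>} \<in> sets M"
proof -
  have "{\<omega> \<in> space M. 1 \<le> T \<and> P T \<omega>} \<in> sets M" for T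
  proof (cases "1 \<le> T")
    case True
    then show ?thesis using assms[OF True] by auto
  qed simp
  then show ?thesis by (rule sets.sets_Collect_countable_Ex)
qed

lemma (in finite_measure) integral_le_sum_measure:
  fixes f :: "'a \<Rightarrow> real"
  assumes "finite I" "\<And>i. i \<in> I \<Longrightarrow> E i \<in> sets M"
    and "\<And>\<omega>. \<omega> \<in> space M \<Longrightarrow> f \<omega> \<le> (\<Sum>i\<in>I. indicator (E i) \<omega>)"
  shows "integral\<^sup>L M f \<le> (\<Sum>i\<in>I. measure M (E i))"
proof -
  have "integral\<^sup>L M f \<le> (\<integral>\<omega>. (\<Sum>i\<in>I. indicator (E i) \<omega>) \<partial>M)"
    using assms by (intro integral_mono' Bochner_Integration.integrable_sum)
      (auto intro: sum_nonneg simp: less_top[symmetric])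
  also have "\<dots> = (\<Sum>i\<in>I. measure M (E i))"
    using assms(2) by (subst Bochner_Integration.integral_sum)
      (auto simp: Int_absorb2 sets.sets_into_space less_top[symmetric])
  finally show ?thesis .
qed

lemma sum_div_card_le_sum_div:
  fixes h :: "'i \<Rightarrow> real"
  assumes "finite I" "S \<subseteq> I" "0 < m" "m \<le> card S" "\<And>i. i \<in> I \<Longrightarrow> 0 \<le> h i"
  shows "(\<Sum>i\<in>S. h i) / card S \<le> (\<Sum>i\<in>I. h i) / m"
proof -
  have "(\<Sum>i\<in>S. h i) / card S \<le> (\<Sum>i\<in>S. h i) / m"
    using assms by (intro divide_left_mono sum_nonneg) auto
  also have "\<dots> \<le> (\<Sum>i\<in>I. h i) / m"
    using assms by (intro divide_right_mono sum_mono2) auto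
  finally show ?thesis .
qed

lemma (in prob_space) sFCR_le_of_card_ge:
  fixes L U :: "nat \<Rightarrow> real \<Rightarrow> nat \<Rightarrow> 'a \<Rightarrow> ereal" and \<theta> :: "nat \<Rightarrow> real"
    and \<tau> :: "'a \<Rightarrow> enat" and a :: real
  assumes "finite I" "0 < m"
    and space_F: "\<And>T. T \<ge> 1 \<Longrightarrow> space (F T) = space M"
    and sets_F: "\<And>T. T \<ge> 1 \<Longrightarrow> sets (F T) \<subseteq> sets M"
    and adapted_L: "\<And>i T. i \<in> I \<Longrightarrow> T \<ge> 1 \<Longrightarrow> L i a T \<in> borel_measurable (F T)"
    and adapted_U: "\<And>i T. i \<in> I \<Longrightarrow> T \<ge> 1 \<Longrightarrow> U i a T \<in> borel_measurable (F T)"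
    and cov_L: "\<And>i. i \<in> I \<Longrightarrow> prob {\<omega> \<in> space M. \<exists>T\<ge>1. ereal (\<theta> i) \<le> L i a T \<omega>} \<le> a"
    and cov_U: "\<And>i. i \<in> I \<Longrightarrow> prob {\<omega> \<in> space M. \<exists>T\<ge>1. U i a T \<omega> \<le> ereal (\<theta> i)} \<le> a"
    and \<tau>_ge: "\<And>\<omega>. \<omega> \<in> space M \<Longrightarrow> \<tau> \<omega> \<ge> 1"
    and S_subset: "\<And>t \<omega>. S t \<omega> \<subseteq> I" and card_S: "\<And>t \<omega>. m \<le> card (S t \<omega>)"
  shows "sFCR M L U \<theta> S \<tau> a \<le> 2 * real (card I) * a / real m"
proof -
  define E_L where "E_L i = {\<omega> \<in> space M. \<exists>T\<ge>1. ereal (\<theta> i) \<le> L i a T \<omega>}" for i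
  define E_U where "E_U i = {\<omega> \<in> space M. \<exists>T\<ge>1. U i a T \<omega> \<le> ereal (\<theta> i)}" for i
  define E where "E i = E_L i \<union> E_U i" for i
  have E_LU_sets: "E_L i \<in> events" "E_U i \<in> events" if "i \<in> I" for i
    unfolding E_L_def E_U_def using space_F sets_F adapted_L[OF that] adapted_U[OF that]
    by (intro sets_Collect_ex_adapted[where F = F] borel_measurable_le; auto)+
  then have E_sets: "E i \<in> events" if "i \<in> I" for i
    using that unfolding E_def by auto
  define miss where "miss t \<omega> i =
    (if \<not> (L i a t \<omega> < ereal (\<theta> i) \<and> ereal (\<theta> i) < U i a t \<omega>) then 1 else 0 :: real)" for t \<omega> i
  have miss_proportion_le: "real m * (case \<tau> \<omega> of \<infinity> \<Rightarrow> 0 | enat t \<Rightarrow> sum (miss t \<omega>) (S t \<omega>) / card (S t \<omega>))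
      \<le> (\<Sum>i\<in>I. indicator (E i) \<omega>)" if "\<omega> \<in> space M" for \<omega>
  proof (cases "\<tau> \<omega>")
    case (enat t)
    then have "t \<ge> 1"
      using \<tau>_ge[OF that] by (simp add: one_enat_def)
    have "sum (miss t \<omega>) (S t \<omega>) / card (S t \<omega>) \<le> sum (miss t \<omega>) I / m"
      using \<open>finite I\<close> \<open>0 < m\<close> S_subset card_S
      by (intro sum_div_card_le_sum_div) (auto simp: miss_def)
    also have "\<dots> \<le> (\<Sum>i\<in>I. indicator (E i) \<omega>) / m"
      using that \<open>t \<ge> 1\<close> by (intro divide_right_mono sum_mono)
        (auto simp: miss_def E_def E_L_def E_U_def not_less indicator_def)
    finally show ?thesis
      using enat \<open>0 < m\<close> by (simp add: field_simps)
  qed (simp add: sum_nonneg)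
  have "real m * sFCR M L U \<theta> S \<tau> a \<le> (\<Sum>i\<in>I. prob (E i))"
    unfolding sFCR_def integral_mult_right_zero[symmetric]
    by (rule integral_le_sum_measure[OF \<open>finite I\<close> E_sets miss_proportion_le[unfolded miss_def]])
  also have "\<dots> \<le> (\<Sum>i\<in>I. 2 * a)"
  proof (rule sum_mono)
    fix i assume "i \<in> I"
    then have "prob (E i) \<le> prob (E_L i) + prob (E_U i)"
      unfolding E_def using E_LU_sets by (intro measure_subadditive) auto
    also have "\<dots> \<le> a + a"
      using cov_L cov_U \<open>i \<in> I\<close> unfolding E_L_def E_U_def by (intro add_mono)
    finally show "prob (E i) \<le> 2 * a"
      by simp
  qed
  finally show ?thesis
    using \<open>0 < m\<close> by (simp add: field_simps)
qed

theorem theorem3: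
  fixes M :: "'a measure" and F :: "nat \<Rightarrow> 'a measure"
    and k m :: nat and \<alpha> :: real and \<theta> :: "nat \<Rightarrow> real"
    and L U :: "nat \<Rightarrow> real \<Rightarrow> nat \<Rightarrow> 'a \<Rightarrow> ereal"
    and \<tau> :: "'a \<Rightarrow> enat"
  assumes prob: "prob_space M"
    and filt_space: "\<And>T. T \<ge> 1 \<Longrightarrow> space (F T) = space M"
    and filt_sub: "\<And>T. T \<ge> 1 \<Longrightarrow> sets (F T) \<subseteq> sets M"
    and filt_mono: "\<And>T T'. 1 \<le> T \<Longrightarrow> T \<le> T' \<Longrightarrow> sets (F T) \<subseteq> sets (F T')"
    and k: "k \<ge> 2" and m1: "1 \<le> m" and mk: "m < k"
    and \<alpha>: "0 < \<alpha>" "\<alpha> < 1"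
    and \<theta>_ord: "\<And>i j. 1 \<le> i \<Longrightarrow> i \<le> j \<Longrightarrow> j \<le> k \<Longrightarrow> \<theta> j \<le> \<theta> i"
    and adaptedL: "\<And>i \<beta> T. i \<in> {1..k} \<Longrightarrow> 0 < \<beta> \<Longrightarrow> \<beta> < 1 \<Longrightarrow> T \<ge> 1 \<Longrightarrow>
                     L i \<beta> T \<in> borel_measurable (F T)"
    and adaptedU: "\<And>i \<beta> T. i \<in> {1..k} \<Longrightarrow> 0 < \<beta> \<Longrightarrow> \<beta> < 1 \<Longrightarrow> T \<ge> 1 \<Longrightarrow>
                     U i \<beta> T \<in> borel_measurable (F T)"
    and LU: "\<And>i \<beta> T \<omega>. i \<in> {1..k} \<Longrightarrow> 0 < \<beta> \<Longrightarrow> \<beta> < 1 \<Longrightarrow> T \<ge> 1 \<Longrightarrow>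
                     L i \<beta> T \<omega> \<le> U i \<beta> T \<omega>"
    and covL: "\<And>i \<beta>. i \<in> {1..k} \<Longrightarrow> 0 < \<beta> \<Longrightarrow> \<beta> < 1 \<Longrightarrow>
                 measure M {\<omega> \<in> space M. \<exists>T\<ge>1. ereal (\<theta> i) \<le> L i \<beta> T \<omega>} \<le> \<beta>"
    and covU: "\<And>i \<beta>. i \<in> {1..k} \<Longrightarrow> 0 < \<beta> \<Longrightarrow> \<beta> < 1 \<Longrightarrow>
                 measure M {\<omega> \<in> space M. \<exists>T\<ge>1. ereal (\<theta> i) \<ge> U i \<beta> T \<omega>} \<le> \<beta>"
    and \<tau>_pos: "\<And>\<omega>. \<omega> \<in> space M \<Longrightarrow> \<tau> \<omega> \<ge> 1"
    and \<tau>_stop: "\<And>T. T \<ge> 1 \<Longrightarrow> {\<omega> \<in> space M. \<tau> \<omega> \<le> enat T} \<in> sets (F T)"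
    and \<tau>_fin: "AE \<omega> in M. \<tau> \<omega> \<noteq> \<infinity>"
  shows "sFCR M L U \<theta>
           (SCS_set k m (\<lambda>i. L i (\<alpha> / (2 * real m * real (k - m))))
                        (\<lambda>i. U i (\<alpha> / (2 * real m * real (k - m)))))
           \<tau> (real m * \<alpha> / (2 * real k)) \<le> \<alpha>"
proof -
  interpret prob_space M by (rule prob)
  define \<beta> where "\<beta> = \<alpha> / (2 * real m * real (k - m))"
  define a where "a = real m * \<alpha> / (2 * real k)"
  have "1 \<le> m * (k - m)"
    using m1 mk by simp
  then have "1 \<le> real m * real (k - m)"
    by (metis of_nat_1 of_nat_le_iff of_nat_mult)
  then have \<beta>: "0 < \<beta>" "\<beta> < 1"
    unfolding \<beta>_def using \<alpha> by (auto simp del: of_nat_diff simp: field_simps)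
  have "real m * \<alpha> < real k"
    using \<alpha> mk by (smt (verit) mult_left_le of_nat_0_le_iff of_nat_less_iff)
  then have a: "0 < a" "a < 1"
    unfolding a_def using \<alpha> m1 k by (auto simp: field_simps)
  have card_ge: "m \<le> card (SCS_set k m (\<lambda>i. L i \<beta>) (\<lambda>i. U i \<beta>) T \<omega>)" for T \<omega>
    using m1 mk LU \<beta> by (intro card_SCS_set_ge) auto
  have "sFCR M L U \<theta> (SCS_set k m (\<lambda>i. L i \<beta>) (\<lambda>i. U i \<beta>)) \<tau> a \<le> 2 * real (card {1..k}) * a / real m"
    using m1 by (intro sFCR_le_of_card_ge[where L = L and U = U and a = a and \<theta> = \<theta> and I = "{1..k}"
          and S = "SCS_set k m (\<lambda>i. L i \<beta>) (\<lambda>i. U i \<beta>)",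
          OF _ _ filt_space filt_sub adaptedL[OF _ a] adaptedU[OF _ a] covL[OF _ a] covU[OF _ a]
          \<tau>_pos SCS_set_subset card_ge]) auto
  also have "\<dots> = \<alpha>"
    using m1 k unfolding a_def by (simp add: field_simps)
  finally show ?thesis
    unfolding \<beta>_def a_def .
qed

end
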